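(* Let $(Y(0),Y(1),\tilde U,X,Z)$ be random variables as described in the context, and suppose Assumption 1 holds. Then for every (measurable) encouragement rule $\boldsymbol{\alpha}:\mathcal{X}\times\mathcal{Z}\to\mathbb{R}$, \[ W(\boldsymbol{\alpha})=E[Y]+E\Big[\int_0^1 \operatorname{MTE}(u,X)\,\big(1\{p(X,\boldsymbol{\alpha}(X,Z))\geq u\}-1\{p(X,Z)\geq u\}\big)\,du\Big]. \]
   Context: Setup: $D\in\{0,1\}$ is a binary treatment; $(Y(0),Y(1))$ are real-valued potential outcomes and $Y=Y(1)D+Y(0)(1-D)$; $X\in\mathcal{X}\subset\mathbb{R}^{d_x}$ are covariates; $Z\in\mathcal{Z}\subset\mathbb{R}$ is an instrument. For each $z\in\mathbb{R}$ the potential treatment is $D(z)=1\{\tilde\nu(X,z)-\tilde U\geq 0\}$ for an unknown function $\tilde\nu$ and an unobserved scalar $\tilde U$, and the observed treatment is $D=D(Z)$. Assumption 1: (i) $\tilde U$ is independent of $Z$ conditional on $X$; (ii) $E[Y(d)\mid X,Z,\tilde U]=E[Y(d)\mid X,\tilde U]$ and $E|Y(d)|<\infty$ for $d\in\{0,1\}$; (iii) $\tilde U$ is continuously distributed conditional on $X$. Define $U=F_{\tilde U|X}(\tilde U\mid X)$ and $\nu(x,z)=F_{\tilde U|X}(\tilde\nu(x,z)\mid x)$, so that $D(z)=1\{\nu(X,z)\ge U\}$ with $U\mid X,Z\sim\mathrm{Unif}[0,1]$, and the propensity score $p(x,z)=\Pr(D=1\mid X=x,Z=z)$ equals $\nu(x,z)$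 (extended to all $z\in\mathbb{R}$ via this formula). The marginal treatment effect is $\operatorname{MTE}(u,x)=E[Y(1)-Y(0)\mid U=u,X=x]$. An encouragement rule is a map $\boldsymbol{\alpha}:\mathcal{X}\times\mathcal{Z}\to\mathbb{R}$ that sets the instrument of an individual with $(X,Z)=(x,z)$ to $\boldsymbol{\alpha}(x,z)$; its social welfare is $W(\boldsymbol{\alpha})=E[Y(D(\boldsymbol{\alpha}(X,Z)))]$ where $Y(D(a))=Y(1)D(a)+Y(0)(1-D(a))$. *)

theory Defs
  imports "HOL-Probability.Probability"
begin

definition gen_sigma :: "'a measure \<Rightarrow> ('a \<Rightarrow> 'b::topological_space) \<Rightarrow> 'a measure" where
  "gen_sigma M f = vimage_algebra (space M) f borel"

definition pot_treat :: "('x \<Rightarrow> real \<Rightarrow> real) \<Rightarrow> ('a \<Rightarrow> 'x) \<Rightarrow> ('a \<Rightarrow> real) \<Rightarrow> 'a \<Rightarrow> real \<Rightarrow> real" where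
  "pot_treat nut X Ut w a = (if nut (X w) a - Ut w \<ge> 0 then 1 else 0)"

definition outcome :: "('a \<Rightarrow> real) \<Rightarrow> ('a \<Rightarrow> real) \<Rightarrow> 'a \<Rightarrow> real \<Rightarrow> real" where
  "outcome Y0 Y1 w d = Y1 w * d + Y0 w * (1 - d)"

definition welfare ::
  "'a measure \<Rightarrow> ('a \<Rightarrow> real) \<Rightarrow> ('a \<Rightarrow> real) \<Rightarrow> ('x \<Rightarrow> real \<Rightarrow> real) \<Rightarrow> ('a \<Rightarrow> 'x) \<Rightarrow> ('a \<Rightarrow> real)
    \<Rightarrow> ('a \<Rightarrow> real) \<Rightarrow> ('x \<Rightarrow> real \<Rightarrow> real) \<Rightarrow> real" where
  "welfare M Y0 Y1 nut X Ut Z \<alpha> =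
     (\<integral>w. outcome Y0 Y1 w (pot_treat nut X Ut w (\<alpha> (X w) (Z w))) \<partial>M)"

text \<open>Propensity score p(x,z) = F_{U~|X}(nu~(x,z) | x), for all real z.\<close>
definition propensity :: "('x \<Rightarrow> real \<Rightarrow> real) \<Rightarrow> ('x \<Rightarrow> real \<Rightarrow> real) \<Rightarrow> 'x \<Rightarrow> real \<Rightarrow> real" where
  "propensity F nut x z = F x (nut x z)"

end

theory Submission
  imports Defs
begin

text \<open>Write \<open>Q x\<close> for the quantile function of the continuous conditional cdf \<open>F x\<close> of \<open>Ut\<close>
  given \<open>X = x\<close>. Conditional independence of \<open>Ut\<close> and \<open>Z\<close> given \<open>X\<close> makes the law of
  \<open>((X, Z), Ut)\<close> equal to that of \<open>((X, Z), Q X V)\<close> with \<open>V\<close> uniform on \<open>(0,1)\<close> and independent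
  of \<open>(X, Z)\<close>: both give \<open>C \<times> (-\<infinity>, t]\<close> the mass \<open>E[1\<^sub>C(X, Z) F(X, t)]\<close>. Consequently
  \<open>Ut = Q X U\<close> almost surely for \<open>U = F X Ut\<close>, so \<open>D(a) = 1{U \<le> p(X, a)}\<close> almost surely and
  \<open>(X, Ut)\<close> and \<open>(U, X)\<close> carry the same information. Since \<open>Y(D(a)) = Y(0) + (Y(1) - Y(0)) D(a)\<close>,
  the welfare gain is \<open>E[(Y(1) - Y(0)) (D(\<alpha>) - D(Z))]\<close>; conditioning on \<open>(X, Z, Ut)\<close> and using
  mean independence turns \<open>Y(1) - Y(0)\<close> into \<open>MTE(U, X)\<close>, and integrating out \<open>V\<close> in
  the coupling gives the integral over \<open>u \<in> [0, 1]\<close>.\<close>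

section \<open>Generated \<open>\<sigma>\<close>-algebras and the uniform distribution on \<open>(0,1)\<close>\<close>

lemma space_gen_sigma[simp]: "space (gen_sigma M f) = space M"
  by (simp add: gen_sigma_def)

lemma subalgebra_gen_sigma:
  fixes f :: "'a \<Rightarrow> 'b::topological_space"
  assumes "f \<in> borel_measurable M"
  shows "subalgebra M (gen_sigma M f)"
  using assms unfolding subalgebra_def gen_sigma_def
  by (simp add: measurable_iff_sets)

lemma (in finite_measure) sigma_finite_subalgebra_gen_sigma:
  fixes f :: "'a \<Rightarrow> 'b::topological_space"
  assumes "f \<in> borel_measurable M"
  shows "sigma_finite_subalgebra M (gen_sigma M f)"
  by (rule finite_measure_subalgebra_is_sigma_finite)
     (simp add: finite_measure_subalgebra_def finite_measure_subalgebra_axioms_def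
       finite_measure_axioms assms subalgebra_gen_sigma)

lemma measurable_gen_sigma_comp:
  assumes "h \<in> measurable (borel :: 'b::topological_space measure) N"
  shows "(\<lambda>w. h (f w)) \<in> measurable (gen_sigma M f) N"
  unfolding gen_sigma_def
  by (rule measurable_compose[OF measurable_vimage_algebra1 assms]) simp

lemma sets_pair_measure_borel_atMost:
  "sets (A \<Otimes>\<^sub>M (borel :: real measure))
     = sigma_sets (space A \<times> UNIV) {a \<times> b |a b. a \<in> sets A \<and> b \<in> range atMost}"
proof -
  have "sets (A \<Otimes>\<^sub>M borel) = sets (sigma (space A \<times> space (borel :: real measure))
         {a \<times> b |a b. a \<in> sets A \<and> b \<in> range atMost})"
  proof (rule sets_pair_eq[where Ca="{space A}" and Cb="range (\<lambda>n::nat. {..real n})"])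
    show "sets (borel :: real measure) = sigma_sets (space borel) (range atMost)"
      by (subst borel_eq_atMost) simp
    show "\<Union>(range (\<lambda>n::nat. {..real n})) = space borel"
      by (auto simp: real_arch_simple)
  qed (auto simp: sets.sigma_sets_eq sets.space_closed)
  also have "\<dots> = sigma_sets (space A \<times> UNIV) {a \<times> b |a b. a \<in> sets A \<and> b \<in> range atMost}"
    by (subst sets_measure_of) (use sets.sets_into_space in auto)
  finally show ?thesis .
qed

lemma (in finite_measure) integrable_abs_bounded:
  fixes f :: "'a \<Rightarrow> real"
  assumes "f \<in> borel_measurable M" "\<And>w. w \<in> space M \<Longrightarrow> \<bar>f w\<bar> \<le> B"
  shows "integrable M f"
  using assms by (intro integrable_const_bound[where B=B]) auto

lemma (in finite_measure) nn_integral_eq_integral_bounded: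
  fixes f :: "'a \<Rightarrow> real"
  assumes "f \<in> borel_measurable M" "\<And>w. w \<in> space M \<Longrightarrow> 0 \<le> f w \<and> f w \<le> B"
  shows "(\<integral>\<^sup>+ w. ennreal (f w) \<partial>M) = ennreal (\<integral> w. f w \<partial>M)"
  using assms by (intro nn_integral_eq_integral integrable_abs_bounded[where B=B]) auto

definition uniform01 :: "real measure" where
  "uniform01 = density lborel (indicator {0<..<1})"

lemma sets_uniform01[measurable_cong]: "sets uniform01 = sets borel"
  by (simp add: uniform01_def)

lemma space_uniform01[simp]: "space uniform01 = UNIV"
  by (simp add: uniform01_def)

lemma emeasure_uniform01:
  "S \<in> sets borel \<Longrightarrow> emeasure uniform01 S = emeasure lborel ({0<..<1} \<inter> S)"
  unfolding uniform01_def
  by (subst emeasure_density)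
     (auto simp flip: nn_integral_indicator intro!: nn_integral_cong split: split_indicator)

lemma prob_space_uniform01: "prob_space uniform01"
  by (rule prob_spaceI) (simp add: emeasure_uniform01)

lemma AE_uniform01: "AE v in uniform01. 0 < v \<and> v < 1"
  unfolding uniform01_def by (subst AE_density) (auto split: split_indicator)

lemma integral_uniform01:
  fixes \<phi> :: "real \<Rightarrow> real"
  assumes [measurable]: "\<phi> \<in> borel_measurable borel"
  shows "(\<integral>v. \<phi> v \<partial>uniform01) = (\<integral>v\<in>{0..1}. \<phi> v \<partial>lborel)"
proof -
  have "(\<integral>v. \<phi> v \<partial>uniform01) = (\<integral>v. indicator {0<..<1} v *\<^sub>R \<phi> v \<partial>lborel)"
    unfolding uniform01_def ennreal_indicator[symmetric] by (rule integral_density) auto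
  also have "\<dots> = (\<integral>v. indicator {0..1} v *\<^sub>R \<phi> v \<partial>lborel)"
  proof (rule integral_cong_AE)
    show "AE v in lborel. indicator {0<..<1} v *\<^sub>R \<phi> v = indicator {0..1} v *\<^sub>R \<phi> v"
      using AE_lborel_singleton[of 0] AE_lborel_singleton[of 1]
      by eventually_elim (auto split: split_indicator)
  qed measurable
  finally show ?thesis by (simp add: set_lebesgue_integral_def)
qed

section \<open>Quantile functions of continuous distribution functions\<close>

locale continuous_cdf_family =
  fixes F :: "'x::topological_space \<Rightarrow> real \<Rightarrow> real"
  assumes F_measurable[measurable]: "\<And>t. (\<lambda>x. F x t) \<in> borel_measurable borel"
    and F_mono: "\<And>x. mono (F x)"
    and F_at_bot: "\<And>x. (F x \<longlongrightarrow> 0) at_bot"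
    and F_at_top: "\<And>x. (F x \<longlongrightarrow> 1) at_top"
    and F_continuous: "\<And>x. continuous_on UNIV (F x)"
begin

lemma F_nonneg: "0 \<le> F x t"
proof (rule tendsto_le[OF _ tendsto_const F_at_bot])
  show "\<forall>\<^sub>F s in at_bot. F x s \<le> F x t"
    using eventually_le_at_bot[of t] by eventually_elim (use F_mono in \<open>auto simp: mono_def\<close>)
qed simp

lemma F_le_1: "F x t \<le> 1"
proof (rule tendsto_le[OF _ F_at_top tendsto_const])
  show "\<forall>\<^sub>F s in at_top. F x t \<le> F x s"
    using eventually_ge_at_top[of t] by eventually_elim (use F_mono in \<open>auto simp: mono_def\<close>)
qed simp

lemma isCont_F: "isCont (F x) t"
  using F_continuous[of x] by (simp add: continuous_on_eq_continuous_at)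

text \<open>Continuity in \<open>t\<close> lets \<open>F\<close> be approximated by its values on the grids
  \<open>\<lfloor>n t\<rfloor> / n\<close>, each of which depends measurably on the pair.\<close>
lemma F_measurable_pair[measurable]:
  "(\<lambda>(x, t). F x t) \<in> borel_measurable (borel \<Otimes>\<^sub>M borel)"
proof -
  let ?g = "\<lambda>n (t::real). real_of_int \<lfloor>real (Suc n) * t\<rfloor> / real (Suc n)"
  have "(\<lambda>p. F (fst p) (snd p)) \<in> borel_measurable (borel \<Otimes>\<^sub>M borel)"
  proof (rule borel_measurable_LIMSEQ_real)
    have grid: "(\<lambda>n. ?g n t) \<longlonglongrightarrow> t" for t
    proof (rule tendsto_sandwich[of "\<lambda>n. t - 1 / real (Suc n)" _ _ "\<lambda>n. t"])
      have "t - 1 / real (Suc n) = (real (Suc n) * t - 1) / real (Suc n)" for n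
        by (simp add: field_simps)
      then show "\<forall>\<^sub>F n in sequentially. t - 1 / real (Suc n) \<le> ?g n t"
        by (intro always_eventually allI) (simp only:, intro divide_right_mono; linarith)
      show "\<forall>\<^sub>F n in sequentially. ?g n t \<le> t"
        by (intro always_eventually allI) (simp add: field_simps)
      show "(\<lambda>n. t - 1 / real (Suc n)) \<longlonglongrightarrow> t"
        using tendsto_diff[OF tendsto_const[of t] LIMSEQ_inverse_real_of_nat]
        by (simp add: inverse_eq_divide)
    qed simp
    show "(\<lambda>n. F (fst p) (?g n (snd p))) \<longlonglongrightarrow> F (fst p) (snd p)" for p
      by (rule isCont_tendsto_compose[OF isCont_F grid])
    show "(\<lambda>p. F (fst p) (?g n (snd p))) \<in> borel_measurable (borel \<Otimes>\<^sub>M borel)" for n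
      by (rule measurable_compose_countable[where
            f="\<lambda>i p. F (fst p) (real_of_int i / real (Suc n))" and g="\<lambda>p. \<lfloor>real (Suc n) * snd p\<rfloor>"])
         measurable
  qed
  then show ?thesis by (simp add: case_prod_beta')
qed

text \<open>The left-continuous inverse of \<open>F x\<close>; the value \<open>0\<close> outside \<open>(0,1)\<close> is arbitrary.\<close>
definition quantile :: "'x \<Rightarrow> real \<Rightarrow> real" where
  "quantile x v = (if 0 < v \<and> v < 1 then Inf {t. v \<le> F x t} else 0)"

lemma
  assumes v: "0 < v" "v < 1"
  shows le_F_quantile: "v \<le> F x (quantile x v)"
    and quantile_le_iff: "quantile x v \<le> t \<longleftrightarrow> v \<le> F x t"
proof -
  define S where "S = {t. v \<le> F x t}"
  have quantile_eq: "quantile x v = Inf S" using v by (simp add: quantile_def S_def)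
  obtain t0 where "v < F x t0"
    using order_tendstoD(1)[OF F_at_top v(2)] by (auto simp: eventually_at_top_linorder)
  then have ne: "S \<noteq> {}" unfolding S_def by (metis empty_Collect_eq less_imp_le)
  obtain b where b: "\<And>s. s \<le> b \<Longrightarrow> F x s < v"
    using order_tendstoD(2)[OF F_at_bot v(1)] by (auto simp: eventually_at_bot_linorder)
  have bdd: "bdd_below S"
  proof (rule bdd_belowI[of _ b])
    show "b \<le> t" if "t \<in> S" for t
      using b[of t] that by (force simp: S_def)
  qed
  have "closed S" unfolding S_def
    by (rule closed_Collect_le) (simp_all add: F_continuous)
  then have inS: "Inf S \<in> S" by (rule closed_contains_Inf[OF ne bdd])
  then show "v \<le> F x (quantile x v)" by (simp add: quantile_eq S_def)
  show "quantile x v \<le> t \<longleftrightarrow> v \<le> F x t"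
  proof
    assume "quantile x v \<le> t"
    then show "v \<le> F x t"
      using inS F_mono[of x] by (auto simp: quantile_eq S_def mono_def intro: order_trans)
  next
    assume "v \<le> F x t"
    then show "quantile x v \<le> t" unfolding quantile_eq by (intro cInf_lower[OF _ bdd]) (simp add: S_def)
  qed
qed

lemma F_quantile:
  assumes v: "0 < v" "v < 1"
  shows "F x (quantile x v) = v"
proof (rule antisym)
  have lim: "(F x \<longlongrightarrow> F x (quantile x v)) (at_left (quantile x v))"
    using isCont_F[where x=x and t="quantile x v"] by (simp add: isCont_def filterlim_at_split)
  have "F x s \<le> v" if "s < quantile x v" for s
    using quantile_le_iff[OF v, where x=x and t=s] that by auto
  then have ev: "\<forall>\<^sub>F s in at_left (quantile x v). F x s \<le> v"
    by (auto simp: eventually_at_filter)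
  show "F x (quantile x v) \<le> v"
    by (rule tendsto_le[OF _ tendsto_const lim ev]) simp
qed (rule le_F_quantile[OF v])

lemma quantile_measurable[measurable]:
  "(\<lambda>(x, v). quantile x v) \<in> borel_measurable (borel \<Otimes>\<^sub>M borel)"
proof (subst borel_measurable_iff_le, intro allI)
  fix a :: real
  have "quantile x v \<le> a \<longleftrightarrow> (0 < v \<and> v < 1 \<and> v \<le> F x a) \<or> (\<not> (0 < v \<and> v < 1) \<and> 0 \<le> a)" for x v
    by (cases "0 < v \<and> v < 1") (auto simp: quantile_le_iff, auto simp: quantile_def)
  then have "{w \<in> space (borel \<Otimes>\<^sub>M borel). (case w of (x, v) \<Rightarrow> quantile x v) \<le> a} =
     {w \<in> space (borel \<Otimes>\<^sub>M borel). (0 < snd w \<and> snd w < 1 \<and> snd w \<le> F (fst w) a)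
        \<or> (\<not> (0 < snd w \<and> snd w < 1) \<and> 0 \<le> a)}"
    by auto
  also have "\<dots> \<in> sets (borel \<Otimes>\<^sub>M borel)" by measurable
  finally show "{w \<in> space (borel \<Otimes>\<^sub>M borel). (case w of (x, v) \<Rightarrow> quantile x v) \<le> a}
      \<in> sets (borel \<Otimes>\<^sub>M borel)" .
qed

lemma emeasure_uniform01_quantile_le: "emeasure uniform01 {v. quantile x v \<le> t} = ennreal (F x t)"
proof -
  have "(\<lambda>v. quantile x v) \<in> borel_measurable borel" by measurable
  then have "{v. quantile x v \<le> t} \<in> sets borel" by measurable
  then have "emeasure uniform01 {v. quantile x v \<le> t}
      = emeasure lborel ({0<..<1} \<inter> {v. quantile x v \<le> t})"
    by (rule emeasure_uniform01)
  also have "{0<..<1} \<inter> {v. quantile x v \<le> t} = {0<..<1} \<inter> {..F x t}"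
    using quantile_le_iff by auto
  also have "emeasure lborel \<dots> = ennreal (F x t)"
  proof (cases "F x t < 1")
    case True
    then have "{0<..<1} \<inter> {..F x t} = {0<..F x t}" by auto
    then show ?thesis using F_nonneg[of x t] by simp
  next
    case False
    then have "{0<..<1} \<inter> {..F x t} = {0<..<1}" using F_le_1[of x t] by auto
    then show ?thesis using False F_le_1[of x t] by simp
  qed
  finally show ?thesis .
qed

end

section \<open>The joint law of \<open>((X, Z), Ut)\<close>\<close>

locale mte_model = continuous_cdf_family F
  for F :: "'x::euclidean_space \<Rightarrow> real \<Rightarrow> real" +
  fixes M :: "'a measure"
    and Y0 Y1 Ut Z :: "'a \<Rightarrow> real"
    and X :: "'a \<Rightarrow> 'x"
    and mte :: "real \<Rightarrow> 'x \<Rightarrow> real"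
  assumes prob_space_M: "prob_space M"
    and Y0_measurable[measurable]: "Y0 \<in> borel_measurable M"
    and Y1_measurable[measurable]: "Y1 \<in> borel_measurable M"
    and Ut_measurable[measurable]: "Ut \<in> borel_measurable M"
    and Z_measurable[measurable]: "Z \<in> borel_measurable M"
    and X_measurable[measurable]: "X \<in> borel_measurable M"
    and cond_indep_Ut_Z: "\<And>A B. A \<in> sets borel \<Longrightarrow> B \<in> sets borel \<Longrightarrow>
        AE w in M. real_cond_exp M (gen_sigma M X)
                     (\<lambda>w. indicator {w. Ut w \<in> A \<and> Z w \<in> B} w) w
                   = real_cond_exp M (gen_sigma M X) (\<lambda>w. indicator {w. Ut w \<in> A} w) w
                     * real_cond_exp M (gen_sigma M X) (\<lambda>w. indicator {w. Z w \<in> B} w) w"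
    and mean_indep_Y0: "AE w in M. real_cond_exp M (gen_sigma M (\<lambda>w. (X w, Z w, Ut w))) Y0 w
                             = real_cond_exp M (gen_sigma M (\<lambda>w. (X w, Ut w))) Y0 w"
    and mean_indep_Y1: "AE w in M. real_cond_exp M (gen_sigma M (\<lambda>w. (X w, Z w, Ut w))) Y1 w
                             = real_cond_exp M (gen_sigma M (\<lambda>w. (X w, Ut w))) Y1 w"
    and integrable_Y0: "integrable M Y0"
    and integrable_Y1: "integrable M Y1"
    and F_cond_cdf: "\<And>t. AE w in M. F (X w) t
                   = real_cond_exp M (gen_sigma M X) (\<lambda>w. indicator {w. Ut w \<le> t} w) w"
    and mte_measurable: "(\<lambda>(u, x). mte u x) \<in> borel_measurable borel"
    and mte_cond_exp: "AE w in M. mte (F (X w) (Ut w)) (X w)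
                   = real_cond_exp M (gen_sigma M (\<lambda>w. (F (X w) (Ut w), X w)))
                       (\<lambda>w. Y1 w - Y0 w) w"
begin

interpretation M: prob_space M by (rule prob_space_M)

lemma mte_measurable_pair[measurable]: "(\<lambda>(u, x). mte u x) \<in> borel_measurable (borel \<Otimes>\<^sub>M borel)"
  using mte_measurable by (simp add: borel_prod)

lemma integrable_effect: "integrable M (\<lambda>w. Y1 w - Y0 w)"
  using integrable_Y0 integrable_Y1 by simp

lemma integral_indicator_XZ_Ut_le:
  assumes A[measurable]: "A \<in> sets borel" and B[measurable]: "B \<in> sets borel"
  shows "(\<integral>w. indicator A (X w) * indicator B (Z w) * indicator {..t} (Ut w) \<partial>M)
       = (\<integral>w. indicator A (X w) * indicator B (Z w) * F (X w) t \<partial>M)"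
proof -
  interpret sigma_finite_subalgebra M "gen_sigma M X"
    by (rule M.sigma_finite_subalgebra_gen_sigma) simp
  let ?CE = "real_cond_exp M (gen_sigma M X)"
  let ?A = "\<lambda>w. indicator A (X w) :: real"
  let ?B = "\<lambda>w. indicator {w. Z w \<in> B} w :: real"
  let ?UtB = "\<lambda>w. indicator {w. Ut w \<le> t \<and> Z w \<in> B} w :: real"
  have [measurable]: "?A \<in> borel_measurable (gen_sigma M X)"
    by (rule measurable_gen_sigma_comp) measurable
  have [measurable]: "(\<lambda>w. ?A w * F (X w) t) \<in> borel_measurable (gen_sigma M X)"
    by (rule measurable_gen_sigma_comp[where h="\<lambda>x. indicator A x * F x t"]) measurable
  have cond_indep: "AE w in M. ?CE ?UtB w = ?CE (\<lambda>w. indicator {w. Ut w \<le> t} w) w * ?CE ?B w"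
    using cond_indep_Ut_Z[of "{..t}" B] B by simp
  have "(\<integral>w. indicator A (X w) * indicator B (Z w) * indicator {..t} (Ut w) \<partial>M)
      = (\<integral>w. ?A w * ?UtB w \<partial>M)"
    by (intro Bochner_Integration.integral_cong) (auto simp: indicator_def)
  also have "\<dots> = (\<integral>w. ?A w * ?CE ?UtB w \<partial>M)"
  proof (rule real_cond_exp_intg(2)[symmetric])
    show "integrable M (\<lambda>w. ?A w * ?UtB w)"
      by (rule M.integrable_abs_bounded[where B=1]) (measurable, auto simp: indicator_def)
  qed measurable
  also have "\<dots> = (\<integral>w. (?A w * F (X w) t) * ?CE ?B w \<partial>M)"
    by (intro integral_cong_AE) (use cond_indep F_cond_cdf[of t] in \<open>auto\<close>)
  also have "\<dots> = (\<integral>w. (?A w * F (X w) t) * ?B w \<partial>M)"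
  proof (rule real_cond_exp_intg(2))
    show "integrable M (\<lambda>w. (?A w * F (X w) t) * ?B w)"
      by (rule M.integrable_abs_bounded[where B=1])
         (measurable, auto simp: indicator_def abs_le_iff F_le_1 intro: order_trans[OF _ F_nonneg])
  qed measurable
  also have "\<dots> = (\<integral>w. indicator A (X w) * indicator B (Z w) * F (X w) t \<partial>M)"
    by (intro Bochner_Integration.integral_cong) (auto simp: indicator_def)
  finally show ?thesis .
qed

lemma nn_integral_Ut_le_XZ_in_rectangle:
  assumes [measurable]: "a \<in> sets borel" "b \<in> sets borel"
  shows "(\<integral>\<^sup>+w. indicator {..t} (Ut w) * indicator (a \<times> b) (X w, Z w) \<partial>M)
       = (\<integral>\<^sup>+w. ennreal (F (X w) t) * indicator (a \<times> b) (X w, Z w) \<partial>M)"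
proof -
  have "(\<integral>\<^sup>+w. indicator {..t} (Ut w) * indicator (a \<times> b) (X w, Z w) \<partial>M)
      = (\<integral>\<^sup>+w. ennreal (indicator a (X w) * indicator b (Z w) * indicator {..t} (Ut w)) \<partial>M)"
    by (auto intro!: nn_integral_cong split: split_indicator)
  also have "\<dots> = ennreal (\<integral>w. indicator a (X w) * indicator b (Z w) * indicator {..t} (Ut w) \<partial>M)"
    by (rule M.nn_integral_eq_integral_bounded[where B=1]) (measurable, auto split: split_indicator)
  also have "\<dots> = ennreal (\<integral>w. indicator a (X w) * indicator b (Z w) * F (X w) t \<partial>M)"
    by (simp add: integral_indicator_XZ_Ut_le)
  also have "\<dots> = (\<integral>\<^sup>+w. ennreal (indicator a (X w) * indicator b (Z w) * F (X w) t) \<partial>M)"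
    by (rule M.nn_integral_eq_integral_bounded[where B=1, symmetric])
       (measurable, auto split: split_indicator simp: F_nonneg F_le_1)
  also have "\<dots> = (\<integral>\<^sup>+w. ennreal (F (X w) t) * indicator (a \<times> b) (X w, Z w) \<partial>M)"
    by (auto intro!: nn_integral_cong split: split_indicator)
  finally show ?thesis .
qed

text \<open>Conditional independence, tested on rectangles, extends to all measurable sets of \<open>(X, Z)\<close>
  by the \<open>\<pi>\<close>-\<open>\<lambda>\<close> uniqueness theorem.\<close>
lemma nn_integral_Ut_le_XZ_in:
  assumes C: "C \<in> sets (borel \<Otimes>\<^sub>M borel)"
  shows "(\<integral>\<^sup>+w. indicator {..t} (Ut w) * indicator C (X w, Z w) \<partial>M)
       = (\<integral>\<^sup>+w. ennreal (F (X w) t) * indicator C (X w, Z w) \<partial>M)"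
proof -
  define N1 where "N1 = distr (density M (\<lambda>w. indicator {..t} (Ut w))) (borel \<Otimes>\<^sub>M borel) (\<lambda>w. (X w, Z w))"
  define N2 where "N2 = distr (density M (\<lambda>w. ennreal (F (X w) t))) (borel \<Otimes>\<^sub>M borel) (\<lambda>w. (X w, Z w))"
  have N1: "emeasure N1 C = (\<integral>\<^sup>+w. indicator {..t} (Ut w) * indicator C (X w, Z w) \<partial>M)"
    if "C \<in> sets (borel \<Otimes>\<^sub>M borel)" for C
    unfolding N1_def using that
    by (subst emeasure_distr) (auto simp: emeasure_density intro!: nn_integral_cong split: split_indicator)
  have N2: "emeasure N2 C = (\<integral>\<^sup>+w. ennreal (F (X w) t) * indicator C (X w, Z w) \<partial>M)"
    if "C \<in> sets (borel \<Otimes>\<^sub>M borel)" for C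
    unfolding N2_def using that
    by (subst emeasure_distr) (auto simp: emeasure_density intro!: nn_integral_cong split: split_indicator)
  have UNIV_sets: "UNIV \<in> sets (borel \<Otimes>\<^sub>M borel :: ('x \<times> real) measure)"
    using sets.top[of "borel \<Otimes>\<^sub>M borel :: ('x \<times> real) measure"] by (simp add: space_pair_measure)
  have "N1 = N2"
  proof (rule measure_eqI_generator_eq[OF Int_stable_pair_measure_generator[of borel borel],
        where \<Omega>=UNIV and A="\<lambda>_. UNIV"])
    show "sets N1 = sigma_sets UNIV {a \<times> b |a b. a \<in> sets (borel :: 'x measure) \<and> b \<in> sets (borel :: real measure)}"
      unfolding N1_def by (simp add: sets_pair_measure)
    show "sets N2 = sigma_sets UNIV {a \<times> b |a b. a \<in> sets (borel :: 'x measure) \<and> b \<in> sets (borel :: real measure)}"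
      unfolding N2_def by (simp add: sets_pair_measure)
    have "emeasure N1 UNIV \<le> (\<integral>\<^sup>+w. 1 \<partial>M)"
      unfolding N1[OF UNIV_sets] by (intro nn_integral_mono) (auto split: split_indicator)
    then show "emeasure N1 UNIV \<noteq> \<infinity>"
      using M.emeasure_space_1 by (auto simp: top_unique)
  next
    fix S assume "S \<in> {a \<times> b |a b. a \<in> sets (borel :: 'x measure) \<and> b \<in> sets (borel :: real measure)}"
    then obtain a b where S: "S = a \<times> b" and ab: "a \<in> sets borel" "b \<in> sets borel"
      by auto
    then have "S \<in> sets (borel \<Otimes>\<^sub>M borel)" by auto
    then show "emeasure N1 S = emeasure N2 S"
      using N1 N2 S nn_integral_Ut_le_XZ_in_rectangle[OF ab] by simp
  qed (auto intro!: exI[of _ UNIV])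
  then show ?thesis using N1[OF C] N2[OF C] by simp
qed

definition law_XZ :: "('x \<times> real) measure" where
  "law_XZ = distr M (borel \<Otimes>\<^sub>M borel) (\<lambda>w. (X w, Z w))"

definition law_XZ_Ut :: "(('x \<times> real) \<times> real) measure" where
  "law_XZ_Ut = distr M ((borel \<Otimes>\<^sub>M borel) \<Otimes>\<^sub>M borel) (\<lambda>w. ((X w, Z w), Ut w))"

abbreviation quantile_map :: "('x \<times> real) \<times> real \<Rightarrow> ('x \<times> real) \<times> real" where
  "quantile_map y \<equiv> (fst y, quantile (fst (fst y)) (snd y))"

definition quantile_coupling :: "(('x \<times> real) \<times> real) measure" where
  "quantile_coupling = distr (law_XZ \<Otimes>\<^sub>M uniform01) ((borel \<Otimes>\<^sub>M borel) \<Otimes>\<^sub>M borel) quantile_map"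

lemma sets_law_XZ[measurable_cong]: "sets law_XZ = sets (borel \<Otimes>\<^sub>M borel)"
  by (simp add: law_XZ_def)

lemma space_law_XZ[simp]: "space law_XZ = UNIV"
  by (simp add: law_XZ_def space_pair_measure)

interpretation U: prob_space uniform01 by (rule prob_space_uniform01)

interpretation XZ: prob_space law_XZ
  unfolding law_XZ_def by (rule M.prob_space_distr) measurable

interpretation XZ_U: pair_sigma_finite law_XZ uniform01 ..

lemma quantile_map_measurable[measurable]:
  "quantile_map \<in> measurable (law_XZ \<Otimes>\<^sub>M uniform01) ((borel \<Otimes>\<^sub>M borel) \<Otimes>\<^sub>M borel)"
  by measurable

lemma emeasure_quantile_coupling_times_atMost:
  assumes C[measurable]: "C \<in> sets (borel \<Otimes>\<^sub>M borel)"
  shows "emeasure quantile_coupling (C \<times> {..t}) = (\<integral>\<^sup>+p. ennreal (F (fst p) t) * indicator C p \<partial>law_XZ)"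
proof -
  let ?S = "quantile_map -` (C \<times> {..t}) \<inter> space (law_XZ \<Otimes>\<^sub>M uniform01)"
  have "?S \<in> sets (law_XZ \<Otimes>\<^sub>M uniform01)" by measurable
  then have "emeasure quantile_coupling (C \<times> {..t}) = (\<integral>\<^sup>+p. emeasure uniform01 (Pair p -` ?S) \<partial>law_XZ)"
    unfolding quantile_coupling_def by (simp add: emeasure_distr U.emeasure_pair_measure_alt)
  also have "\<dots> = (\<integral>\<^sup>+p. ennreal (F (fst p) t) * indicator C p \<partial>law_XZ)"
  proof (intro nn_integral_cong)
    fix p :: "'x \<times> real"
    have "Pair p -` ?S = (if p \<in> C then {v. quantile (fst p) v \<le> t} else {})"
      by (auto simp: space_pair_measure)
    then show "emeasure uniform01 (Pair p -` ?S) = ennreal (F (fst p) t) * indicator C p"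
      by (simp add: emeasure_uniform01_quantile_le)
  qed
  finally show ?thesis .
qed

lemma emeasure_law_XZ_Ut_times_atMost:
  assumes C[measurable]: "C \<in> sets (borel \<Otimes>\<^sub>M borel)"
  shows "emeasure law_XZ_Ut (C \<times> {..t}) = (\<integral>\<^sup>+p. ennreal (F (fst p) t) * indicator C p \<partial>law_XZ)"
proof -
  have "emeasure law_XZ_Ut (C \<times> {..t}) = (\<integral>\<^sup>+w. indicator {..t} (Ut w) * indicator C (X w, Z w) \<partial>M)"
    unfolding law_XZ_Ut_def
    by (subst emeasure_distr) (auto simp flip: nn_integral_indicator intro!: nn_integral_cong split: split_indicator)
  also have "\<dots> = (\<integral>\<^sup>+w. ennreal (F (X w) t) * indicator C (X w, Z w) \<partial>M)"
    by (rule nn_integral_Ut_le_XZ_in[OF C])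
  also have "\<dots> = (\<integral>\<^sup>+p. ennreal (F (fst p) t) * indicator C p \<partial>law_XZ)"
    unfolding law_XZ_def by (subst nn_integral_distr) auto
  finally show ?thesis .
qed

lemma law_XZ_Ut_eq_quantile_coupling: "law_XZ_Ut = quantile_coupling"
proof (rule measure_eqI_generator_eq[where \<Omega>=UNIV
      and E="{a \<times> b |a b. a \<in> sets (borel \<Otimes>\<^sub>M borel :: ('x \<times> real) measure) \<and> b \<in> range atMost}"
      and A="\<lambda>n. UNIV \<times> {..real n}"])
  let ?E = "{a \<times> b |a b. a \<in> sets (borel \<Otimes>\<^sub>M borel :: ('x \<times> real) measure) \<and> b \<in> range (atMost :: real \<Rightarrow> _)}"
  have space_XZ: "space (borel \<Otimes>\<^sub>M borel :: ('x \<times> real) measure) = UNIV"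
    by (simp add: space_pair_measure)
  show "Int_stable ?E"
  proof (rule Int_stableI)
    fix a b assume "a \<in> ?E" "b \<in> ?E"
    then obtain a1 t1 b1 t2 where "a = a1 \<times> {..t1}" "b = b1 \<times> {..t2}"
      "a1 \<in> sets (borel \<Otimes>\<^sub>M borel)" "b1 \<in> sets (borel \<Otimes>\<^sub>M borel)" by auto
    moreover have "(a1 \<times> {..t1}) \<inter> (b1 \<times> {..t2}) = (a1 \<inter> b1) \<times> {..min t1 t2}" by auto
    ultimately show "a \<inter> b \<in> ?E" by auto
  qed
  note sets_E = sets_pair_measure_borel_atMost[of "borel \<Otimes>\<^sub>M borel :: ('x \<times> real) measure", unfolded space_XZ UNIV_Times_UNIV]
  show "sets law_XZ_Ut = sigma_sets UNIV ?E"
    unfolding law_XZ_Ut_def sets_distr by (rule sets_E)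
  show "sets quantile_coupling = sigma_sets UNIV ?E"
    unfolding quantile_coupling_def sets_distr by (rule sets_E)
  show "range (\<lambda>n. UNIV \<times> {..real n}) \<subseteq> ?E"
    using sets.top[of "borel \<Otimes>\<^sub>M borel :: ('x \<times> real) measure"] space_XZ by auto
  show "(\<Union>n. UNIV \<times> {..real n}) = UNIV" by (auto simp: real_arch_simple)
  show "emeasure law_XZ_Ut (UNIV \<times> {..real n}) \<noteq> \<infinity>" for n
  proof -
    interpret prob_space law_XZ_Ut
      unfolding law_XZ_Ut_def by (rule M.prob_space_distr) measurable
    show ?thesis using emeasure_finite by (simp add: top_ennreal_def)
  qed
next
  fix S assume "S \<in> {a \<times> b |a b. a \<in> sets (borel \<Otimes>\<^sub>M borel :: ('x \<times> real) measure) \<and> b \<in> range (atMost :: real \<Rightarrow> real set)}"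
  then obtain C t where "S = C \<times> {..t}" and "C \<in> sets (borel \<Otimes>\<^sub>M borel)" by auto
  then show "emeasure law_XZ_Ut S = emeasure quantile_coupling S"
    by (simp add: emeasure_law_XZ_Ut_times_atMost emeasure_quantile_coupling_times_atMost)
qed (auto)

lemma AE_XZ_Ut_from_quantile:
  assumes P: "{y \<in> space ((borel \<Otimes>\<^sub>M borel) \<Otimes>\<^sub>M borel). P y}
      \<in> sets ((borel \<Otimes>\<^sub>M borel) \<Otimes>\<^sub>M borel :: (('x \<times> real) \<times> real) measure)"
    and quantile_P: "\<And>p v. 0 < v \<Longrightarrow> v < 1 \<Longrightarrow> P (p, quantile (fst p) v)"
  shows "AE w in M. P ((X w, Z w), Ut w)"
proof -
  have "{y \<in> space (law_XZ \<Otimes>\<^sub>M uniform01). P (quantile_map y)}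
      = quantile_map -` {y \<in> space ((borel \<Otimes>\<^sub>M borel) \<Otimes>\<^sub>M borel). P y} \<inter> space (law_XZ \<Otimes>\<^sub>M uniform01)"
    by (auto simp: space_pair_measure)
  also have "\<dots> \<in> sets (law_XZ \<Otimes>\<^sub>M uniform01)"
    by (rule measurable_sets[OF quantile_map_measurable P])
  finally have "AE y in law_XZ \<Otimes>\<^sub>M uniform01. P (quantile_map y)"
  proof (rule XZ_U.AE_pair_measure)
    show "AE p in law_XZ. AE v in uniform01. P (quantile_map (p, v))"
      by (intro AE_I2 eventually_mono[OF AE_uniform01]) (simp add: quantile_P)
  qed
  then have "AE y in law_XZ_Ut. P y"
    unfolding law_XZ_Ut_eq_quantile_coupling quantile_coupling_def
    by (subst AE_distr_iff[OF quantile_map_measurable P])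
  then show ?thesis
    unfolding law_XZ_Ut_def by (subst (asm) AE_distr_iff) (use P in auto)
qed

lemma integral_disintegrate_Ut:
  fixes g :: "('x \<times> real) \<times> real \<Rightarrow> real"
  assumes g[measurable]: "g \<in> borel_measurable ((borel \<Otimes>\<^sub>M borel) \<Otimes>\<^sub>M borel)"
    and integrable_g: "integrable M (\<lambda>w. g ((X w, Z w), Ut w))"
  shows "(\<integral>w. g ((X w, Z w), Ut w) \<partial>M) = (\<integral>w. (\<integral>v. g ((X w, Z w), quantile (X w) v) \<partial>uniform01) \<partial>M)"
proof -
  have "integrable law_XZ_Ut g"
    using integrable_g unfolding law_XZ_Ut_def by (subst integrable_distr_eq) auto
  then have integrable_prod: "integrable (law_XZ \<Otimes>\<^sub>M uniform01) (\<lambda>y. g (quantile_map y))"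
    unfolding law_XZ_Ut_eq_quantile_coupling quantile_coupling_def by (subst (asm) integrable_distr_eq) auto
  have "(\<integral>w. g ((X w, Z w), Ut w) \<partial>M) = integral\<^sup>L law_XZ_Ut g"
    unfolding law_XZ_Ut_def by (subst integral_distr) auto
  also have "\<dots> = (\<integral>y. g (quantile_map y) \<partial>(law_XZ \<Otimes>\<^sub>M uniform01))"
    unfolding law_XZ_Ut_eq_quantile_coupling quantile_coupling_def by (subst integral_distr) auto
  also have "\<dots> = (\<integral>p. (\<integral>v. g (p, quantile (fst p) v) \<partial>uniform01) \<partial>law_XZ)"
    using XZ_U.integral_fst'[OF integrable_prod] by simp
  also have "\<dots> = (\<integral>w. (\<integral>v. g ((X w, Z w), quantile (X w) v) \<partial>uniform01) \<partial>M)"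
    unfolding law_XZ_def by (subst integral_distr) auto
  finally show ?thesis .
qed

lemma Ut_eq_quantile_F_Ut: "AE w in M. Ut w = quantile (X w) (F (X w) (Ut w))"
proof -
  have "AE w in M. (\<lambda>y. snd y = quantile (fst (fst y)) (F (fst (fst y)) (snd y))) ((X w, Z w), Ut w)"
    by (rule AE_XZ_Ut_from_quantile) (measurable, simp add: F_quantile)
  then show ?thesis by simp
qed

lemma Ut_le_iff_F_le:
  assumes s[measurable]: "(\<lambda>(x, z). s x z) \<in> borel_measurable (borel \<Otimes>\<^sub>M borel)"
  shows "AE w in M. Ut w \<le> s (X w) (Z w) \<longleftrightarrow> F (X w) (Ut w) \<le> F (X w) (s (X w) (Z w))"
proof -
  have "AE w in M. (\<lambda>y. snd y \<le> s (fst (fst y)) (snd (fst y))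
      \<longleftrightarrow> F (fst (fst y)) (snd y) \<le> F (fst (fst y)) (s (fst (fst y)) (snd (fst y))))
    ((X w, Z w), Ut w)"
    by (rule AE_XZ_Ut_from_quantile) (measurable, simp add: F_quantile quantile_le_iff)
  then show ?thesis by simp
qed

section \<open>Marginal treatment effects\<close>

text \<open>Since \<open>Ut = quantile X (F X Ut)\<close> almost surely, \<open>(X, Ut)\<close> and \<open>(F X Ut, X)\<close> generate
  the same \<open>\<sigma>\<close>-algebra up to null sets.\<close>
lemma cond_exp_XUt_eq_cond_exp_UX:
  "AE w in M. real_cond_exp M (gen_sigma M (\<lambda>w. (X w, Ut w))) (\<lambda>w. Y1 w - Y0 w) w
            = real_cond_exp M (gen_sigma M (\<lambda>w. (F (X w) (Ut w), X w))) (\<lambda>w. Y1 w - Y0 w) w"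
proof -
  let ?XUt = "gen_sigma M (\<lambda>w. (X w, Ut w))"
  let ?UX = "gen_sigma M (\<lambda>w. (F (X w) (Ut w), X w))"
  let ?D = "\<lambda>w. Y1 w - Y0 w"
  interpret XUt: sigma_finite_subalgebra M ?XUt
    by (rule M.sigma_finite_subalgebra_gen_sigma) simp
  interpret UX: sigma_finite_subalgebra M ?UX
    by (rule M.sigma_finite_subalgebra_gen_sigma) simp
  have "(\<lambda>p. (F (fst p) (snd p), fst p)) \<in> measurable (borel :: ('x \<times> real) measure) borel"
    unfolding borel_prod[symmetric] by measurable
  from measurable_gen_sigma_comp[OF this, where M=M and f="\<lambda>w. (X w, Ut w)"]
  have "subalgebra ?XUt ?UX"
    unfolding subalgebra_def by (simp add: measurable_iff_sets gen_sigma_def)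
  have "(\<lambda>p. (snd p, quantile (snd p) (fst p))) \<in> measurable (borel :: (real \<times> 'x) measure) borel"
    unfolding borel_prod[symmetric] by measurable
  from measurable_gen_sigma_comp[OF this, where M=M and f="\<lambda>w. (F (X w) (Ut w), X w)"]
  have quantile_UX: "(\<lambda>w. (X w, quantile (X w) (F (X w) (Ut w)))) \<in> measurable ?UX borel"
    by simp
  show ?thesis
  proof (rule XUt.real_cond_exp_charact)
    show "real_cond_exp M ?UX ?D \<in> borel_measurable ?XUt"
      by (rule measurable_from_subalg[OF \<open>subalgebra ?XUt ?UX\<close> borel_measurable_cond_exp])
  next
    fix A assume "A \<in> sets ?XUt"
    moreover have "sets ?XUt = {(\<lambda>w. (X w, Ut w)) -` B \<inter> space M | B. B \<in> sets borel}"
      unfolding gen_sigma_def by (rule sets_vimage_algebra2) simp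
    ultimately obtain B where B: "B \<in> sets borel" and A: "A = (\<lambda>w. (X w, Ut w)) -` B \<inter> space M"
      by auto
    define A' where "A' = (\<lambda>w. (X w, quantile (X w) (F (X w) (Ut w)))) -` B \<inter> space M"
    have "A' \<in> sets ?UX" unfolding A'_def using measurable_sets[OF quantile_UX B] by simp
    have sets_M: "A \<in> sets M" "A' \<in> sets M"
      using \<open>A \<in> sets ?XUt\<close> \<open>A' \<in> sets ?UX\<close> XUt.subalg UX.subalg by (auto simp: subalgebra_def)
    have "AE w in M. w \<in> A \<longleftrightarrow> w \<in> A'"
      using Ut_eq_quantile_F_Ut by eventually_elim (auto simp: A A'_def)
    then have same_set_integral: "(\<integral>w\<in>A. f w \<partial>M) = (\<integral>w\<in>A'. f w \<partial>M)"
      if [measurable]: "f \<in> borel_measurable M" for f :: "'a \<Rightarrow> real"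
      by (intro set_integral_cong_set) (use sets_M in \<open>auto simp: set_borel_measurable_def\<close>)
    show "(\<integral>w\<in>A. ?D w \<partial>M) = (\<integral>w\<in>A. real_cond_exp M ?UX ?D w \<partial>M)"
      by (simp add: same_set_integral UX.real_cond_exp_intA[OF integrable_effect \<open>A' \<in> sets ?UX\<close>])
  qed (auto intro: integrable_effect UX.real_cond_exp_int(1)[OF integrable_effect])
qed

lemma cond_exp_XZUt_eq_mte:
  "AE w in M. real_cond_exp M (gen_sigma M (\<lambda>w. (X w, Z w, Ut w))) (\<lambda>w. Y1 w - Y0 w) w
            = mte (F (X w) (Ut w)) (X w)"
proof -
  interpret XZUt: sigma_finite_subalgebra M "gen_sigma M (\<lambda>w. (X w, Z w, Ut w))"
    by (rule M.sigma_finite_subalgebra_gen_sigma) simp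
  interpret XUt: sigma_finite_subalgebra M "gen_sigma M (\<lambda>w. (X w, Ut w))"
    by (rule M.sigma_finite_subalgebra_gen_sigma) simp
  show ?thesis
    using XZUt.real_cond_exp_diff[OF integrable_Y1 integrable_Y0]
      XUt.real_cond_exp_diff[OF integrable_Y1 integrable_Y0]
      mean_indep_Y0 mean_indep_Y1 cond_exp_XUt_eq_cond_exp_UX mte_cond_exp
    by eventually_elim simp
qed

lemma integrable_mte_F_Ut: "integrable M (\<lambda>w. mte (F (X w) (Ut w)) (X w))"
proof -
  interpret UX: sigma_finite_subalgebra M "gen_sigma M (\<lambda>w. (F (X w) (Ut w), X w))"
    by (rule M.sigma_finite_subalgebra_gen_sigma) simp
  show ?thesis
  proof (rule integrable_cong_AE_imp[OF UX.real_cond_exp_int(1)[OF integrable_effect]])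
    show "AE w in M. real_cond_exp M (gen_sigma M (\<lambda>w. (F (X w) (Ut w), X w))) (\<lambda>w. Y1 w - Y0 w) w
        = mte (F (X w) (Ut w)) (X w)"
      using mte_cond_exp by (auto elim: eventually_mono)
  qed measurable
qed

definition treated_mte :: "('x \<Rightarrow> real \<Rightarrow> real) \<Rightarrow> ('x \<times> real) \<times> real \<Rightarrow> real" where
  "treated_mte s y = (if F (fst (fst y)) (snd y) \<le> F (fst (fst y)) (s (fst (fst y)) (snd (fst y)))
     then 1 else 0) * mte (F (fst (fst y)) (snd y)) (fst (fst y))"

lemma treated_mte_measurable[measurable]:
  assumes [measurable]: "(\<lambda>(x, z). s x z) \<in> borel_measurable (borel \<Otimes>\<^sub>M borel)"
  shows "treated_mte s \<in> borel_measurable ((borel \<Otimes>\<^sub>M borel) \<Otimes>\<^sub>M borel)"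
  unfolding treated_mte_def by measurable

lemma integrable_treated_mte:
  assumes [measurable]: "(\<lambda>(x, z). s x z) \<in> borel_measurable (borel \<Otimes>\<^sub>M borel)"
  shows "integrable M (\<lambda>w. treated_mte s ((X w, Z w), Ut w))"
  unfolding treated_mte_def by (rule Bochner_Integration.integrable_bound[OF integrable_mte_F_Ut]) auto

lemma integral_effect_treated_eq_mte:
  assumes s[measurable]: "(\<lambda>(x, z). s x z) \<in> borel_measurable (borel \<Otimes>\<^sub>M borel)"
  shows "(\<integral>w. (Y1 w - Y0 w) * pot_treat s X Ut w (Z w) \<partial>M) = (\<integral>w. treated_mte s ((X w, Z w), Ut w) \<partial>M)"
proof -
  let ?XZUt = "gen_sigma M (\<lambda>w. (X w, Z w, Ut w))"
  let ?D = "\<lambda>w. Y1 w - Y0 w"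
  let ?treated = "\<lambda>w. if F (X w) (Ut w) \<le> F (X w) (s (X w) (Z w)) then 1 else 0 :: real"
  interpret XZUt: sigma_finite_subalgebra M ?XZUt
    by (rule M.sigma_finite_subalgebra_gen_sigma) simp
  have "(\<lambda>t. if F (fst t) (snd (snd t)) \<le> F (fst t) (s (fst t) (fst (snd t))) then 1 else 0 :: real)
      \<in> borel_measurable (borel :: ('x \<times> real \<times> real) measure)"
    unfolding borel_prod[symmetric] by measurable
  from measurable_gen_sigma_comp[OF this, where M=M and f="\<lambda>w. (X w, Z w, Ut w)"]
  have treated_measurable: "?treated \<in> borel_measurable ?XZUt" by simp
  have "(\<integral>w. ?D w * pot_treat s X Ut w (Z w) \<partial>M) = (\<integral>w. ?treated w * ?D w \<partial>M)"
    by (rule integral_cong_AE)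
       (use Ut_le_iff_F_le[OF s] in \<open>auto simp: pot_treat_def elim!: eventually_mono\<close>)
  also have "\<dots> = (\<integral>w. ?treated w * real_cond_exp M ?XZUt ?D w \<partial>M)"
    by (rule XZUt.real_cond_exp_intg(2)[symmetric, OF _ treated_measurable])
       (auto intro: Bochner_Integration.integrable_bound[OF integrable_effect])
  also have "\<dots> = (\<integral>w. treated_mte s ((X w, Z w), Ut w) \<partial>M)"
    by (rule integral_cong_AE)
       (use cond_exp_XZUt_eq_mte in \<open>auto simp: treated_mte_def elim!: eventually_mono\<close>)
  finally show ?thesis .
qed

lemma integral_uniform01_treated_mte_diff:
  assumes [measurable]: "(\<lambda>(x, z). s x z) \<in> borel_measurable (borel \<Otimes>\<^sub>M borel)"
    "(\<lambda>(x, z). s' x z) \<in> borel_measurable (borel \<Otimes>\<^sub>M borel)"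
  shows "(\<integral>v. treated_mte s ((x, z), quantile x v) - treated_mte s' ((x, z), quantile x v) \<partial>uniform01)
       = (\<integral>u\<in>{0..1}. mte u x * (indicator {u. propensity F s x z \<ge> u} u
           - indicator {u. propensity F s' x z \<ge> u} u) \<partial>lborel)"
proof -
  have "(\<integral>v. treated_mte s ((x, z), quantile x v) - treated_mte s' ((x, z), quantile x v) \<partial>uniform01)
      = (\<integral>v. mte v x * (indicator {u. propensity F s x z \<ge> u} v
           - indicator {u. propensity F s' x z \<ge> u} v) \<partial>uniform01)"
  proof (rule integral_cong_AE)
    show "AE v in uniform01. treated_mte s ((x, z), quantile x v) - treated_mte s' ((x, z), quantile x v)
        = mte v x * (indicator {u. propensity F s x z \<ge> u} v - indicator {u. propensity F s' x z \<ge> u} v)"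
      using AE_uniform01 by eventually_elim (simp add: treated_mte_def propensity_def F_quantile algebra_simps)
  qed (unfold treated_mte_def, measurable)
  also have "\<dots> = (\<integral>u\<in>{0..1}. mte u x * (indicator {u. propensity F s x z \<ge> u} u
           - indicator {u. propensity F s' x z \<ge> u} u) \<partial>lborel)"
    by (rule integral_uniform01) (simp add: atMost_def[symmetric])
  finally show ?thesis .
qed

lemma integrable_effect_times_pot_treat:
  assumes [measurable]: "(\<lambda>(x, z). s x z) \<in> borel_measurable (borel \<Otimes>\<^sub>M borel)"
  shows "integrable M (\<lambda>w. (Y1 w - Y0 w) * pot_treat s X Ut w (Z w))"
  by (rule Bochner_Integration.integrable_bound[OF integrable_effect]) (auto simp: pot_treat_def)

lemma integrable_outcome_pot_treat:
  assumes [measurable]: "(\<lambda>(x, z). s x z) \<in> borel_measurable (borel \<Otimes>\<^sub>M borel)"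
  shows "integrable M (\<lambda>w. outcome Y0 Y1 w (pot_treat s X Ut w (Z w)))"
  unfolding outcome_def pot_treat_def
  by (rule Bochner_Integration.integrable_bound[OF Bochner_Integration.integrable_add[OF integrable_abs[OF integrable_Y0] integrable_abs[OF integrable_Y1]]])
     (auto simp: abs_le_iff)

lemma integral_effect_times_pot_treat_diff:
  assumes s: "(\<lambda>(x, z). s x z) \<in> borel_measurable (borel \<Otimes>\<^sub>M borel)"
    and s': "(\<lambda>(x, z). s' x z) \<in> borel_measurable (borel \<Otimes>\<^sub>M borel)"
  shows "(\<integral>w. (Y1 w - Y0 w) * (pot_treat s X Ut w (Z w) - pot_treat s' X Ut w (Z w)) \<partial>M)
     = (\<integral>w. (\<integral>u\<in>{0..1}. mte u (X w) *
          (indicator {u. propensity F s (X w) (Z w) \<ge> u} u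
           - indicator {u. propensity F s' (X w) (Z w) \<ge> u} u) \<partial>lborel) \<partial>M)"
proof -
  have "(\<integral>w. (Y1 w - Y0 w) * (pot_treat s X Ut w (Z w) - pot_treat s' X Ut w (Z w)) \<partial>M)
      = (\<integral>w. (Y1 w - Y0 w) * pot_treat s X Ut w (Z w) \<partial>M)
        - (\<integral>w. (Y1 w - Y0 w) * pot_treat s' X Ut w (Z w) \<partial>M)"
    unfolding right_diff_distrib
    by (rule Bochner_Integration.integral_diff[OF integrable_effect_times_pot_treat[OF s]
          integrable_effect_times_pot_treat[OF s']])
  also have "\<dots> = (\<integral>w. treated_mte s ((X w, Z w), Ut w) - treated_mte s' ((X w, Z w), Ut w) \<partial>M)"
    unfolding integral_effect_treated_eq_mte[OF s] integral_effect_treated_eq_mte[OF s']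
    by (rule Bochner_Integration.integral_diff[OF integrable_treated_mte[OF s]
          integrable_treated_mte[OF s'], symmetric])
  also have "\<dots> = (\<integral>w. (\<integral>v. treated_mte s ((X w, Z w), quantile (X w) v)
      - treated_mte s' ((X w, Z w), quantile (X w) v) \<partial>uniform01) \<partial>M)"
    using integral_disintegrate_Ut[where g="\<lambda>y. treated_mte s y - treated_mte s' y"]
      integrable_treated_mte[OF s] integrable_treated_mte[OF s'] s s' by simp
  finally show ?thesis by (simp only: integral_uniform01_treated_mte_diff[OF s s'])
qed

end

lemma outcome_diff: "outcome Y0 Y1 w d - outcome Y0 Y1 w d' = (Y1 w - Y0 w) * (d - d')"
  by (simp add: outcome_def algebra_simps)

theorem theorem1:
  fixes M :: "'a measure"
    and Y0 Y1 Ut Z :: "'a \<Rightarrow> real"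
    and X :: "'a \<Rightarrow> 'x::euclidean_space"
    and nut :: "'x \<Rightarrow> real \<Rightarrow> real"
    and F :: "'x \<Rightarrow> real \<Rightarrow> real"
    and mte :: "real \<Rightarrow> 'x \<Rightarrow> real"
    and \<alpha> :: "'x \<Rightarrow> real \<Rightarrow> real"
  assumes prob: "prob_space M"
    and meas_Y0: "Y0 \<in> borel_measurable M"
    and meas_Y1: "Y1 \<in> borel_measurable M"
    and meas_Ut: "Ut \<in> borel_measurable M"
    and meas_Z: "Z \<in> borel_measurable M"
    and meas_X: "X \<in> borel_measurable M"
    and meas_nut: "(\<lambda>(x, z). nut x z) \<in> borel_measurable borel"
    \<comment> \<open>Assumption 1(i): U~ independent of Z conditional on X\<close>
    and A1_i: "\<And>A B. A \<in> sets borel \<Longrightarrow> B \<in> sets borel \<Longrightarrow>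
        AE w in M. real_cond_exp M (gen_sigma M X)
                     (\<lambda>w. indicator {w. Ut w \<in> A \<and> Z w \<in> B} w) w
                   = real_cond_exp M (gen_sigma M X) (\<lambda>w. indicator {w. Ut w \<in> A} w) w
                     * real_cond_exp M (gen_sigma M X) (\<lambda>w. indicator {w. Z w \<in> B} w) w"
    \<comment> \<open>Assumption 1(ii): mean independence of Y(d) from Z given (X, U~), and integrability\<close>
    and A1_ii_Y0: "AE w in M. real_cond_exp M (gen_sigma M (\<lambda>w. (X w, Z w, Ut w))) Y0 w
                             = real_cond_exp M (gen_sigma M (\<lambda>w. (X w, Ut w))) Y0 w"
    and A1_ii_Y1: "AE w in M. real_cond_exp M (gen_sigma M (\<lambda>w. (X w, Z w, Ut w))) Y1 w
                             = real_cond_exp M (gen_sigma M (\<lambda>w. (X w, Ut w))) Y1 w"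
    and int_Y0: "integrable M Y0"
    and int_Y1: "integrable M Y1"
    \<comment> \<open>F is (a regular version of) the conditional CDF of U~ given X ...\<close>
    and F_cdf: "\<And>t. AE w in M. F (X w) t
                   = real_cond_exp M (gen_sigma M X) (\<lambda>w. indicator {w. Ut w \<le> t} w) w"
    and F_meas: "\<And>t. (\<lambda>x. F x t) \<in> borel_measurable borel"
    and F_mono: "\<And>x. mono (F x)"
    and F_bot: "\<And>x. (F x \<longlongrightarrow> 0) at_bot"
    and F_top: "\<And>x. (F x \<longlongrightarrow> 1) at_top"
    \<comment> \<open>... Assumption 1(iii): U~ is continuously distributed conditional on X\<close>
    and A1_iii: "\<And>x. continuous_on UNIV (F x)"
    \<comment> \<open>mte is (a version of) MTE(u,x) = E[Y(1) - Y(0) | U = u, X = x], with U = F(U~ | X)\<close>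
    and meas_mte: "(\<lambda>(u, x). mte u x) \<in> borel_measurable borel"
    and mte_def: "AE w in M. mte (F (X w) (Ut w)) (X w)
                   = real_cond_exp M (gen_sigma M (\<lambda>w. (F (X w) (Ut w), X w)))
                       (\<lambda>w. Y1 w - Y0 w) w"
    \<comment> \<open>measurable encouragement rule\<close>
    and meas_\<alpha>: "(\<lambda>(x, z). \<alpha> x z) \<in> borel_measurable borel"
  shows "welfare M Y0 Y1 nut X Ut Z \<alpha>
       = (\<integral>w. outcome Y0 Y1 w (pot_treat nut X Ut w (Z w)) \<partial>M)
         + (\<integral>w. (\<integral>u\<in>{0..1}. mte u (X w) *
               (indicator {u. propensity F nut (X w) (\<alpha> (X w) (Z w)) \<ge> u} u
                - indicator {u. propensity F nut (X w) (Z w) \<ge> u} u) \<partial>lborel) \<partial>M)"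
proof -
  interpret mte_model F M Y0 Y1 Ut Z X mte
    by (intro mte_model.intro continuous_cdf_family.intro mte_model_axioms.intro) (fact assms)+
  have [measurable]: "(\<lambda>(x, z). \<alpha> x z) \<in> borel_measurable (borel \<Otimes>\<^sub>M borel)"
    using meas_\<alpha> by (simp add: borel_prod)
  have nut[measurable]: "(\<lambda>(x, z). nut x z) \<in> borel_measurable (borel \<Otimes>\<^sub>M borel)"
    using meas_nut by (simp add: borel_prod)
  have nut_\<alpha>: "(\<lambda>(x, z). nut x (\<alpha> x z)) \<in> borel_measurable (borel \<Otimes>\<^sub>M borel)"
    by measurable
  have "welfare M Y0 Y1 nut X Ut Z \<alpha>
      = (\<integral>w. outcome Y0 Y1 w (pot_treat (\<lambda>x z. nut x (\<alpha> x z)) X Ut w (Z w)) \<partial>M)"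
    by (simp add: welfare_def pot_treat_def)
  also have "\<dots> = (\<integral>w. outcome Y0 Y1 w (pot_treat nut X Ut w (Z w)) \<partial>M)
      + (\<integral>w. (Y1 w - Y0 w) * (pot_treat (\<lambda>x z. nut x (\<alpha> x z)) X Ut w (Z w)
            - pot_treat nut X Ut w (Z w)) \<partial>M)"
    using Bochner_Integration.integral_diff[OF integrable_outcome_pot_treat[OF nut_\<alpha>]
        integrable_outcome_pot_treat[OF nut]]
    by (simp add: outcome_diff)
  finally show ?thesis
    by (simp add: integral_effect_times_pot_treat_diff[OF nut_\<alpha> nut] propensity_def)
qed

end
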